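(* Let $\phi\in C^3((0,\infty))$, $\eta=\phi'$ and $\hat\eta(r)=\eta(r)+2\eta(2r)$, and suppose there are constants $0<a_0<\tilde r_1<\tilde r_2<2a_0$ and $a_1>a_0$ such that: $\eta'(r)>0$ for $0<r<\tilde r_1$ and $\eta'(r)<0$ for $r>\tilde r_1$; $\eta''(r)<0$ for $0<r<\tilde r_2$ and $\eta''(r)>0$ for $r>\tilde r_2$; $\hat\eta(r)<0$ for $0<r<a_0$ and $\hat\eta(r)>0$ for $r>a_0$; $\hat\eta'(r)>0$ for $0<r<a_1$ and $\hat\eta'(r)<0$ for $r>a_1$. Let $N,K$ be positive integers with $K<N-1$ and define $\hat{\mathbf\Psi}^F:(0,\infty)^{2N+1}\to\mathbb R^{2N+1}$ by $\hat\psi^F_j(\mathbf r)=\eta(r_j)+2\eta(2r_j)$ for $-N\le j\le -K$ and for $K\le j\le N$, and $\hat\psi^F_j(\mathbf r)=\eta(r_j)+\eta(r_j+r_{j-1})+\eta(r_j+r_{j+1})+[2\eta(2r_K)-\eta(r_K+r_{K-1})-\eta(r_K+r_{K+1})]$ for $-K+1\le j\le K-1$. Suppose $r_L,r_U$ satisfy $\tilde r_2/2<r_L<r_U$ and $\eta'(r_U)+12\eta'(2r_L)\ge 0$. Then $r_U<a_1$, and the Jacobian matrix $D\hat{\mathbf\Psi}^F(\mathbf r)$ is strictly diagonally dominant for all $\mathbf r\in\Omega=(r_L,r_U)^{2N+1}$.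
   Context: A square matrix $(A_{ij})$ is strictly diagonally dominant if $|A_{ii}|>\sum_{j\ne i}|A_{ij}|$ for every row $i$. *)

theory Defs
  imports "HOL-Analysis.Analysis"
begin

text \<open>Vectors in (0,inf)^(2N+1) are indexed by the integers -N..N and
represented as functions int => real (only the values at indices -N..N matter).\<close>

definition etahat :: "(real \<Rightarrow> real) \<Rightarrow> real \<Rightarrow> real" where
  "etahat eta r = eta r + 2 * eta (2 * r)"

definition PsiF :: "(real \<Rightarrow> real) \<Rightarrow> nat \<Rightarrow> nat \<Rightarrow> (int \<Rightarrow> real) \<Rightarrow> int \<Rightarrow> real" where
  "PsiF eta N K r j =
     (if (- int N \<le> j \<and> j \<le> - int K) \<or> (int K \<le> j \<and> j \<le> int N)
      then eta (r j) + 2 * eta (2 * r j)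
      else eta (r j) + eta (r j + r (j - 1)) + eta (r j + r (j + 1))
           + (2 * eta (2 * r (int K)) - eta (r (int K) + r (int K - 1))
              - eta (r (int K) + r (int K + 1))))"

definition jac :: "((int \<Rightarrow> real) \<Rightarrow> int \<Rightarrow> real) \<Rightarrow> (int \<Rightarrow> real) \<Rightarrow> int \<Rightarrow> int \<Rightarrow> real" where
  "jac F r i j = deriv (\<lambda>t. F (r(j := t)) i) (r j)"

definition strictly_diag_dominant :: "int set \<Rightarrow> (int \<Rightarrow> int \<Rightarrow> real) \<Rightarrow> bool" where
  "strictly_diag_dominant I A \<longleftrightarrow>
     (\<forall>i\<in>I. \<bar>A i i\<bar> > (\<Sum>j\<in>I - {i}. \<bar>A i j\<bar>))"

end

theory Submission
  imports Defs
begin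

text \<open>Put \<open>e = - eta1 (2 * rL)\<close>, which is positive since \<open>2 * rL > rt2 > rt1\<close>. Every
  coupling term of \<open>PsiF\<close> evaluates \<open>eta\<close> at a sum \<open>r a + r b > 2 * rL\<close>, where \<open>eta1\<close> is
  negative and increasing, so \<open>\<bar>eta1 (r a + r b)\<bar> < e\<close>; on the diagonal, \<open>eta1\<close> is
  decreasing up to \<open>rU \<le> rt1\<close>, so \<open>eta1 (r i) > eta1 rU \<ge> 12 * e\<close>. A row of the Jacobian is
  \<open>eta1 (r i)\<close> on the diagonal plus, for every coupling term \<open>c * eta (r a + r b)\<close>, the entry
  \<open>c * eta1 (r a + r b)\<close> added in columns \<open>a\<close> and \<open>b\<close>. The coefficients of a row have
  absolute sum at most 6, so these contributions have total absolute value at most \<open>12 * e\<close>.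
  Finally the derivative \<open>eta1 rU + 4 * eta1 (2 * rU) > 12 * e - 4 * e\<close> of \<open>etahat eta\<close> at \<open>rU\<close>
  is positive, which by continuity rules out \<open>rU \<ge> a1\<close>.\<close>

lemma decreasing_below_if_deriv_neg:
  fixes f f' :: "real \<Rightarrow> real"
  assumes f_d: "\<And>z. z > 0 \<Longrightarrow> (f has_real_derivative f' z) (at z)"
    and neg: "\<And>z. 0 < z \<Longrightarrow> z < c \<Longrightarrow> f' z < 0"
    and "0 < x" "x < y" "y \<le> c"
  shows "f y < f x"
proof (rule DERIV_neg_imp_decreasing_open[OF \<open>x < y\<close>])
  show "continuous_on {x..y} f"
    by (rule DERIV_continuous_on[where D = f'], rule has_field_derivative_at_within, rule f_d)
      (use \<open>0 < x\<close> in auto)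
next
  fix z assume "x < z" "z < y"
  then show "\<exists>d. (f has_real_derivative d) (at z) \<and> d < 0"
    using f_d[of z] neg[of z] assms(3-5) by auto
qed

lemma increasing_above_if_deriv_pos:
  fixes f f' :: "real \<Rightarrow> real"
  assumes f_d: "\<And>z. z > 0 \<Longrightarrow> (f has_real_derivative f' z) (at z)"
    and pos: "\<And>z. c < z \<Longrightarrow> f' z > 0"
    and "0 < x" "c \<le> x" "x < y"
  shows "f x < f y"
proof (rule DERIV_pos_imp_increasing_open[OF \<open>x < y\<close>])
  show "continuous_on {x..y} f"
    by (rule DERIV_continuous_on[where D = f'], rule has_field_derivative_at_within, rule f_d)
      (use \<open>0 < x\<close> in auto)
next
  fix z assume "x < z" "z < y"
  then show "\<exists>d. (f has_real_derivative d) (at z) \<and> d > 0"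
    using f_d[of z] pos[of z] assms(3,4) by auto
qed

lemma less_if_isCont_pos_neg_above:
  fixes g :: "real \<Rightarrow> real"
  assumes "isCont g x" "g x > 0" "\<And>y. y > a \<Longrightarrow> g y < 0"
  shows "x < a"
proof (rule ccontr)
  assume "\<not> x < a"
  have "\<forall>\<^sub>F y in at_right x. g y \<le> 0"
    using eventually_at_right_less[of x]
    by (rule eventually_mono) (use \<open>\<not> x < a\<close> assms(3) in \<open>smt (verit)\<close>)
  moreover have "(g \<longlongrightarrow> g x) (at_right x)"
    using assms(1) by (simp add: isCont_def filterlim_at_split)
  ultimately have "g x \<le> 0" by (intro tendsto_upperbound) auto
  with assms(2) show False by simp
qed

lemma deriv_etahat:
  assumes eta_d: "\<And>x. x > 0 \<Longrightarrow> (eta has_real_derivative eta' x) (at x)" and "x > 0"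
  shows "deriv (etahat eta) x = eta' x + 4 * eta' (2 * x)"
proof -
  have "((\<lambda>x. eta x + 2 * eta (2 * x)) has_real_derivative eta' x + 2 * (eta' (2 * x) * 2)) (at x)"
    using assms by (auto intro!: derivative_eq_intros DERIV_chain2[OF eta_d])
  then show ?thesis
    unfolding etahat_def[abs_def] by (simp add: DERIV_imp_deriv)
qed

lemma less_if_deriv_etahat_pos:
  assumes eta_d: "\<And>x. x > 0 \<Longrightarrow> (eta has_real_derivative eta' x) (at x)"
    and eta'_d: "\<And>x. x > 0 \<Longrightarrow> (eta' has_real_derivative eta'' x) (at x)"
    and neg: "\<And>y. y > a \<Longrightarrow> deriv (etahat eta) y < 0"
    and "0 \<le> a" "0 < x" "deriv (etahat eta) x > 0"
  shows "x < a"
proof (rule less_if_isCont_pos_neg_above)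
  show "isCont (\<lambda>y. eta' y + 4 * eta' (2 * y)) x"
    using \<open>0 < x\<close>
    by (intro continuous_intros isCont_o2[OF _ DERIV_isCont[OF eta'_d]] DERIV_isCont[OF eta'_d]) auto
  show "eta' x + 4 * eta' (2 * x) > 0"
    using assms(5,6) deriv_etahat[OF eta_d] by simp
  show "eta' y + 4 * eta' (2 * y) < 0" if "y > a" for y
    using neg[OF that] deriv_etahat[OF eta_d, of y] that \<open>0 \<le> a\<close> by simp
qed

definition pair_sum :: "(real \<Rightarrow> real) \<Rightarrow> (real \<times> int \<times> int) list \<Rightarrow> (int \<Rightarrow> real) \<Rightarrow> real" where
  "pair_sum f ts r = (\<Sum>(c, a, b) \<leftarrow> ts. c * f (r a + r b))"

definition pair_sum_partial ::
    "(real \<Rightarrow> real) \<Rightarrow> (real \<times> int \<times> int) list \<Rightarrow> (int \<Rightarrow> real) \<Rightarrow> int \<Rightarrow> real" where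
  "pair_sum_partial f' ts r j =
     (\<Sum>(c, a, b) \<leftarrow> ts. c * f' (r a + r b) * (of_bool (a = j) + of_bool (b = j)))"

lemma has_real_derivative_fun_upd_apply:
  "((\<lambda>t. (r(j := t)) a) has_real_derivative of_bool (a = j)) (at (r j))"
  by (cases "a = j") auto

lemma has_real_derivative_pair_sum:
  assumes f_d: "\<And>x. x > 0 \<Longrightarrow> (f has_real_derivative f' x) (at x)"
    and pos: "\<And>c a b. (c, a, b) \<in> set ts \<Longrightarrow> r a + r b > 0"
  shows "((\<lambda>t. pair_sum f ts (r(j := t))) has_real_derivative pair_sum_partial f' ts r j) (at (r j))"
  using pos
proof (induction ts)
  case Nil
  then show ?case by (simp add: pair_sum_def pair_sum_partial_def)
next
  case (Cons p ts)
  obtain c a b where p: "p = (c, a, b)" by (cases p)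
  have "r a + r b > 0" using Cons.prems[of c a b] p by simp
  have head: "((\<lambda>t. f ((r(j := t)) a + (r(j := t)) b)) has_real_derivative
      f' (r a + r b) * (of_bool (a = j) + of_bool (b = j))) (at (r j))"
    using DERIV_chain2[of f "f' (r a + r b)" "\<lambda>t. (r(j := t)) a + (r(j := t)) b", OF _
        DERIV_add[OF has_real_derivative_fun_upd_apply has_real_derivative_fun_upd_apply]]
      f_d[OF \<open>r a + r b > 0\<close>]
    by simp
  have tail: "((\<lambda>t. pair_sum f ts (r(j := t))) has_real_derivative pair_sum_partial f' ts r j) (at (r j))"
    by (rule Cons.IH) (use Cons.prems in auto)
  have "((\<lambda>t. c * f ((r(j := t)) a + (r(j := t)) b) + pair_sum f ts (r(j := t))) has_real_derivative
      c * (f' (r a + r b) * (of_bool (a = j) + of_bool (b = j))) + pair_sum_partial f' ts r j) (at (r j))"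
    by (intro DERIV_add DERIV_cmult head tail)
  then show ?case by (simp add: p pair_sum_def pair_sum_partial_def mult.assoc)
qed

lemma sum_abs_pair_sum_partial_le:
  assumes "finite I"
    and in_I: "\<And>c a b. (c, a, b) \<in> set ts \<Longrightarrow> a \<in> I \<and> b \<in> I"
    and bound: "\<And>c a b. (c, a, b) \<in> set ts \<Longrightarrow> \<bar>f' (r a + r b)\<bar> \<le> e"
  shows "(\<Sum>j\<in>I. \<bar>pair_sum_partial f' ts r j\<bar>) \<le> 2 * e * (\<Sum>t \<leftarrow> ts. \<bar>fst t\<bar>)"
  using in_I bound
proof (induction ts)
  case Nil
  then show ?case by (simp add: pair_sum_partial_def)
next
  case (Cons p ts)
  obtain c a b where p: "p = (c, a, b)" by (cases p)
  define w where "w = c * f' (r a + r b)"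
  have "(\<Sum>j\<in>I. \<bar>w * (of_bool (a = j) + of_bool (b = j))\<bar>) = 2 * \<bar>w\<bar>"
    using Cons.prems(1)[of c a b] p \<open>finite I\<close>
    by (simp add: abs_mult sum_distrib_left[symmetric] sum.distrib of_bool_def)
  also have "\<dots> \<le> 2 * e * \<bar>c\<bar>"
    using Cons.prems(2)[of c a b] p
    by (simp add: w_def abs_mult) (metis abs_ge_zero mult.commute mult_left_mono)
  finally have head: "(\<Sum>j\<in>I. \<bar>w * (of_bool (a = j) + of_bool (b = j))\<bar>) \<le> 2 * e * \<bar>c\<bar>" .
  have tail: "(\<Sum>j\<in>I. \<bar>pair_sum_partial f' ts r j\<bar>) \<le> 2 * e * (\<Sum>t \<leftarrow> ts. \<bar>fst t\<bar>)"
    by (rule Cons.IH) (meson Cons.prems list.set_intros(2))+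
  have "(\<Sum>j\<in>I. \<bar>pair_sum_partial f' (p # ts) r j\<bar>)
      \<le> (\<Sum>j\<in>I. \<bar>w * (of_bool (a = j) + of_bool (b = j))\<bar>) + (\<Sum>j\<in>I. \<bar>pair_sum_partial f' ts r j\<bar>)"
    by (simp add: p w_def pair_sum_partial_def sum.distrib[symmetric] sum_mono abs_triangle_ineq)
  also have "\<dots> \<le> 2 * e * \<bar>c\<bar> + 2 * e * (\<Sum>t \<leftarrow> ts. \<bar>fst t\<bar>)"
    using head tail by (rule add_mono)
  finally show ?case by (simp add: p algebra_simps)
qed

lemma strictly_dominant_row:
  fixes A B :: "int \<Rightarrow> real"
  assumes "finite I" "i \<in> I"
    and A: "\<And>j. A j = of_bool (i = j) * d + B j"
    and small: "(\<Sum>j\<in>I. \<bar>B j\<bar>) < d"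
  shows "(\<Sum>j\<in>I - {i}. \<bar>A j\<bar>) < \<bar>A i\<bar>"
proof -
  have "(\<Sum>j\<in>I - {i}. \<bar>A j\<bar>) = (\<Sum>j\<in>I. \<bar>B j\<bar>) - \<bar>B i\<bar>"
    using assms(1,2) by (simp add: A sum_diff1)
  also have "\<dots> < d - \<bar>B i\<bar>" using small by simp
  also have "\<dots> \<le> \<bar>A i\<bar>" using A[of i] by simp
  finally show ?thesis .
qed

definition PsiF_terms :: "nat \<Rightarrow> nat \<Rightarrow> int \<Rightarrow> (real \<times> int \<times> int) list" where
  "PsiF_terms N K i =
     (if (- int N \<le> i \<and> i \<le> - int K) \<or> (int K \<le> i \<and> i \<le> int N) then [(2, i, i)]
      else [(1, i, i - 1), (1, i, i + 1),
            (2, int K, int K), (- 1, int K, int K - 1), (- 1, int K, int K + 1)])"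

lemma PsiF_eq_pair_sum: "PsiF eta N K r i = eta (r i) + pair_sum eta (PsiF_terms N K i) r"
  by (simp add: PsiF_def PsiF_terms_def pair_sum_def flip: mult_2)

lemma sum_abs_fst_PsiF_terms: "(\<Sum>t \<leftarrow> PsiF_terms N K i. \<bar>fst t\<bar>) \<le> 6"
  by (simp add: PsiF_terms_def)

lemma PsiF_terms_indices:
  assumes "K < N" "i \<in> {- int N..int N}" "(c, a, b) \<in> set (PsiF_terms N K i)"
  shows "a \<in> {- int N..int N} \<and> b \<in> {- int N..int N}"
  using assms by (auto simp: PsiF_terms_def split: if_splits)

lemma jac_PsiF:
  assumes eta_d: "\<And>x. x > 0 \<Longrightarrow> (eta has_real_derivative eta' x) (at x)"
    and "r i > 0" "\<And>c a b. (c, a, b) \<in> set (PsiF_terms N K i) \<Longrightarrow> r a + r b > 0"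
  shows "jac (PsiF eta N K) r i j
    = of_bool (i = j) * eta' (r i) + pair_sum_partial eta' (PsiF_terms N K i) r j"
proof -
  have "((\<lambda>t. eta ((r(j := t)) i)) has_real_derivative eta' (r i) * of_bool (i = j)) (at (r j))"
    using DERIV_chain2[of eta "eta' (r i)" "\<lambda>t. (r(j := t)) i", OF _ has_real_derivative_fun_upd_apply]
      eta_d[OF \<open>r i > 0\<close>]
    by simp
  then have "((\<lambda>t. PsiF eta N K (r(j := t)) i) has_real_derivative
      eta' (r i) * of_bool (i = j) + pair_sum_partial eta' (PsiF_terms N K i) r j) (at (r j))"
    unfolding PsiF_eq_pair_sum
    by (intro DERIV_add has_real_derivative_pair_sum[OF eta_d]) (use assms in auto)
  then show ?thesis unfolding jac_def by (simp add: DERIV_imp_deriv mult.commute)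
qed

lemma strictly_diag_dominant_jac_PsiF:
  assumes eta_d: "\<And>x. x > 0 \<Longrightarrow> (eta has_real_derivative eta' x) (at x)"
    and "K < N" "0 \<le> rL"
    and r: "\<forall>j\<in>{- int N..int N}. r j \<in> {rL<..<rU}"
    and diag: "\<And>x. rL < x \<Longrightarrow> x < rU \<Longrightarrow> eta' x > 12 * e"
    and off: "\<And>s. 2 * rL < s \<Longrightarrow> \<bar>eta' s\<bar> \<le> e"
  shows "strictly_diag_dominant {- int N..int N} (jac (PsiF eta N K) r)"
  unfolding strictly_diag_dominant_def
proof
  fix i assume i: "i \<in> {- int N..int N}"
  let ?I = "{- int N..int N}" and ?ts = "PsiF_terms N K i"
  have r_i: "rL < r i" "r i < rU" using r i by auto
  have idx: "a \<in> ?I \<and> b \<in> ?I" if "(c, a, b) \<in> set ?ts" for c a b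
    using PsiF_terms_indices[OF \<open>K < N\<close> i that] .
  have pair: "2 * rL < r a + r b" if "(c, a, b) \<in> set ?ts" for c a b
  proof -
    have "rL < r a" "rL < r b" using idx[OF that] r by auto
    then show ?thesis by linarith
  qed
  have "(\<Sum>j\<in>?I. \<bar>pair_sum_partial eta' ?ts r j\<bar>) \<le> 2 * e * (\<Sum>t \<leftarrow> ?ts. \<bar>fst t\<bar>)"
    by (rule sum_abs_pair_sum_partial_le) (use idx off pair in auto)
  also have "\<dots> \<le> 2 * e * 6"
    using off[of "2 * r i"] r_i sum_abs_fst_PsiF_terms by (intro mult_left_mono) auto
  also have "\<dots> < eta' (r i)" using diag r_i by simp
  finally have small: "(\<Sum>j\<in>?I. \<bar>pair_sum_partial eta' ?ts r j\<bar>) < eta' (r i)" .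
  have row: "jac (PsiF eta N K) r i j = of_bool (i = j) * eta' (r i) + pair_sum_partial eta' ?ts r j"
    for j
  proof (rule jac_PsiF[where r = r and i = i, OF eta_d])
    show "r i > 0" "\<And>c a b. (c, a, b) \<in> set ?ts \<Longrightarrow> r a + r b > 0"
      using r_i \<open>0 \<le> rL\<close> pair by fastforce+
  qed
  show "(\<Sum>j\<in>?I - {i}. \<bar>jac (PsiF eta N K) r i j\<bar>) < \<bar>jac (PsiF eta N K) r i i\<bar>"
    using strictly_dominant_row[OF finite_atLeastAtMost_int i row small] .
qed

theorem lemma4p4:
  fixes phi eta eta1 eta2 :: "real \<Rightarrow> real"
    and a0 a1 rt1 rt2 rL rU :: real
    and N K :: nat
  assumes phi_d: "\<And>x. x > 0 \<Longrightarrow> (phi has_real_derivative eta x) (at x)"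
    and eta_d: "\<And>x. x > 0 \<Longrightarrow> (eta has_real_derivative eta1 x) (at x)"
    and eta1_d: "\<And>x. x > 0 \<Longrightarrow> (eta1 has_real_derivative eta2 x) (at x)"
    and eta2_c: "continuous_on {0<..} eta2"
    and cst: "0 < a0" "a0 < rt1" "rt1 < rt2" "rt2 < 2 * a0" "a1 > a0"
    and h1: "\<And>r. 0 < r \<Longrightarrow> r < rt1 \<Longrightarrow> eta1 r > 0"
    and h2: "\<And>r. r > rt1 \<Longrightarrow> eta1 r < 0"
    and h3: "\<And>r. 0 < r \<Longrightarrow> r < rt2 \<Longrightarrow> eta2 r < 0"
    and h4: "\<And>r. r > rt2 \<Longrightarrow> eta2 r > 0"
    and h5: "\<And>r. 0 < r \<Longrightarrow> r < a0 \<Longrightarrow> etahat eta r < 0"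
    and h6: "\<And>r. r > a0 \<Longrightarrow> etahat eta r > 0"
    and h7: "\<And>r. 0 < r \<Longrightarrow> r < a1 \<Longrightarrow> deriv (etahat eta) r > 0"
    and h8: "\<And>r. r > a1 \<Longrightarrow> deriv (etahat eta) r < 0"
    and NK: "0 < K" "0 < N" "K < N - 1"
    and rLU: "rt2 / 2 < rL" "rL < rU"
    and rU: "eta1 rU + 12 * eta1 (2 * rL) \<ge> 0"
  shows "rU < a1 \<and>
         (\<forall>r. (\<forall>j\<in>{- int N..int N}. r j \<in> {rL<..<rU}) \<longrightarrow>
              strictly_diag_dominant {- int N..int N} (jac (PsiF eta N K) r))"
proof -
  have "rL > 0" using cst rLU by linarith
  define e where "e = - eta1 (2 * rL)"
  have "e > 0" unfolding e_def using h2[of "2 * rL"] cst rLU by simp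
  have eta1_rU: "eta1 rU \<ge> 12 * e" using rU by (simp add: e_def)
  have "rU \<le> rt1" using h2[of rU] eta1_rU \<open>e > 0\<close> by (cases "rt1 < rU") auto
  have diag: "eta1 x > 12 * e" if "rL < x" "x < rU" for x
  proof -
    have "eta1 rU < eta1 x"
      by (rule decreasing_below_if_deriv_neg[where c = rt2, OF eta1_d h3])
        (use that \<open>rL > 0\<close> \<open>rU \<le> rt1\<close> cst in auto)
    with eta1_rU show ?thesis by linarith
  qed
  have off: "\<bar>eta1 s\<bar> < e" if "2 * rL < s" for s
  proof -
    have "eta1 (2 * rL) < eta1 s"
      by (rule increasing_above_if_deriv_pos[where c = rt2, OF eta1_d h4])
        (use that \<open>rL > 0\<close> rLU in auto)
    moreover have "eta1 s < 0" using h2[of s] that rLU cst by simp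
    ultimately show ?thesis unfolding e_def by simp
  qed
  have "rU < a1"
  proof (rule less_if_deriv_etahat_pos[OF eta_d eta1_d h8])
    show "deriv (etahat eta) rU > 0"
      using deriv_etahat[OF eta_d, of rU] eta1_rU off[of "2 * rU"] \<open>rL > 0\<close> rLU
      by (simp add: abs_less_iff)
  qed (use cst \<open>rL > 0\<close> rLU in auto)
  moreover have "strictly_diag_dominant {- int N..int N} (jac (PsiF eta N K) r)"
    if "\<forall>j\<in>{- int N..int N}. r j \<in> {rL<..<rU}" for r
  proof (rule strictly_diag_dominant_jac_PsiF[OF eta_d _ _ that diag])
    show "\<bar>eta1 s\<bar> \<le> e" if "2 * rL < s" for s using off[OF that] by simp
  qed (use NK \<open>rL > 0\<close> in auto)
  ultimately show ?thesis by blast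
qed

end
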